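(* Let $c>0$ and consider the vector field, on the space of variables $(\rho,v,p,e,dt,dx)$ with $|v|<c$ (where $dt,dx$ are treated as independent coordinates), \[ X=-\frac{\rho v^{2}e}{c^{2}-v^{2}}\partial_{\rho}-pv\,\partial_{v}-p^{2}\partial_{p}+\frac{c^{2}p^{2}-e^{2}v^{2}}{c^{2}-v^{2}}\partial_{e}+\frac{(c^{2}p+ev^{2})\,dt-v(e+p)\,dx}{c^{2}-v^{2}}\,\partial_{dt}, \] which is the infinitesimal generator of the one-parameter group of reciprocal transformations $\rho^{*}=\dfrac{\rho\sqrt{(\epsilon p+1)^{2}-v^{2}/c^{2}}}{(\epsilon(p+Sv^{2})+1)\sqrt{1-v^{2}/c^{2}}}$, $v^{*}=\dfrac{v}{\epsilon p+1}$, $p^{*}=\dfrac{p}{\epsilon p+1}$, $e^{*}=\dfrac{S(c^{2}(\epsilon p+1)^{2}-v^{2})}{(\epsilon(p+Sv^{2})+1)(\epsilon p+1)}-\dfrac{p}{\epsilon p+1}$, $dt^{*}=dt-\epsilon(Sv\,dx-(p+Sv^{2})dt)$, $dx^{*}=dx$, where $S=(e+p)/(c^{2}-v^{2})$. Then the functions \[ J_{1}=\frac{(cp-ve)(c-v)}{(cp+ve)(c+v)},\qquad J_{2}=\frac{\rho p}{cp+ev}\sqrt{\frac{c-v}{c+v}}, \] \[ J_{3}=\frac{v(cp+ev)}{p(c-v)(pc^{2}+ev^{2})}\left((c^{2}p+ev^{2})\,dt-v(e+p)\,dx\right) \] are invariants of this group, i.e. $XJ_{1}=XJ_{2}=XJ_{3}=0$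 (on the domain where they are defined).
   Context: $c$ is the speed of light, $\rho,v,p,e$ are density, velocity, pressure and energy density of a 1+1-dimensional relativistic gas. A function $J$ is an invariant of a one-parameter group of transformations with infinitesimal generator $X$ if and only if $XJ=0$. *)

theory Defs
  imports "HOL-Analysis.Analysis"
begin

type_synonym field6 = "real \<Rightarrow> real \<Rightarrow> real \<Rightarrow> real \<Rightarrow> real \<Rightarrow> real \<Rightarrow> real"

definition Xgen :: "real \<Rightarrow> field6 \<Rightarrow> field6" where
  "Xgen c J \<rho> v p e dt dx =
      (- (\<rho> * v^2 * e) / (c^2 - v^2)) * deriv (\<lambda>s. J s v p e dt dx) \<rho>
    + (- (p * v)) * deriv (\<lambda>s. J \<rho> s p e dt dx) v
    + (- (p^2)) * deriv (\<lambda>s. J \<rho> v s e dt dx) p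
    + ((c^2 * p^2 - e^2 * v^2) / (c^2 - v^2)) * deriv (\<lambda>s. J \<rho> v p s dt dx) e
    + (((c^2 * p + e * v^2) * dt - v * (e + p) * dx) / (c^2 - v^2))
        * deriv (\<lambda>s. J \<rho> v p e s dx) dt"

definition J1 :: "real \<Rightarrow> field6" where
  "J1 c \<rho> v p e dt dx = ((c * p - v * e) * (c - v)) / ((c * p + v * e) * (c + v))"

definition J2 :: "real \<Rightarrow> field6" where
  "J2 c \<rho> v p e dt dx = (\<rho> * p) / (c * p + e * v) * sqrt ((c - v) / (c + v))"

definition J3 :: "real \<Rightarrow> field6" where
  "J3 c \<rho> v p e dt dx = (v * (c * p + e * v)) / (p * (c - v) * (p * c^2 + e * v^2))
      * ((c^2 * p + e * v^2) * dt - v * (e + p) * dx)"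

end

theory Submission
  imports Defs
begin

(* For J1 and J2, X J_i is computed from closed forms of the partial derivatives and vanishes
   by a polynomial identity. J3 has more structure: where M = pc^2 + ev^2 is nonzero,
   J3 = J3_factor (dt - J3_slope dx). The (v,p,e)-part of X annihilates J3_slope and multiplies
   J3_factor by -M/(c^2 - v^2), while the dt-component of X is M (dt - J3_slope dx)/(c^2 - v^2),
   which exactly compensates. *)

lemma power2_diff_power2_factored: "(x::'a::comm_ring_1)^2 - y^2 = (x - y) * (x + y)"
  by (simp add: algebra_simps power2_eq_square)

lemma Xgen_eq:
  fixes J :: field6
  assumes "((\<lambda>s. J s v p e dt dx) has_real_derivative J\<^sub>\<rho>) (at \<rho>)"
    and "((\<lambda>s. J \<rho> s p e dt dx) has_real_derivative J\<^sub>v) (at v)"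
    and "((\<lambda>s. J \<rho> v s e dt dx) has_real_derivative J\<^sub>p) (at p)"
    and "((\<lambda>s. J \<rho> v p s dt dx) has_real_derivative J\<^sub>e) (at e)"
    and "((\<lambda>s. J \<rho> v p e s dx) has_real_derivative J\<^sub>t) (at dt)"
  shows "Xgen c J \<rho> v p e dt dx =
      (- (\<rho> * v^2 * e) / (c^2 - v^2)) * J\<^sub>\<rho> + (- (p * v)) * J\<^sub>v + (- (p^2)) * J\<^sub>p
    + ((c^2 * p^2 - e^2 * v^2) / (c^2 - v^2)) * J\<^sub>e
    + (((c^2 * p + e * v^2) * dt - v * (e + p) * dx) / (c^2 - v^2)) * J\<^sub>t"
  unfolding Xgen_def using assms[THEN DERIV_imp_deriv] by simp

lemma has_real_derivative_transform_nonzero: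
  fixes f g m :: "real \<Rightarrow> real"
  assumes "(f has_real_derivative D) (at x)" and "continuous_on UNIV m" and "m x \<noteq> 0"
    and "\<And>s. m s \<noteq> 0 \<Longrightarrow> f s = g s"
  shows "(g has_real_derivative D) (at x)"
proof (rule has_field_derivative_transform_within_open[OF assms(1)])
  show "open {s. m s \<noteq> 0}"
    using open_Collect_neq[OF assms(2) continuous_on_const] .
qed (use assms in auto)

lemma has_real_derivative_doppler_factor:
  fixes c v :: real
  assumes "c - v > 0" and "c + v > 0"
  shows "((\<lambda>s. sqrt ((c - s) / (c + s))) has_real_derivative
      - c * sqrt ((c - v) / (c + v)) / (c^2 - v^2)) (at v)"
proof -
  let ?q = "(c - v) / (c + v)"
  have q: "?q > 0" and cv: "c - v \<noteq> 0" "c + v \<noteq> 0"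
    using assms by simp_all
  have dq: "((\<lambda>s. (c - s) / (c + s)) has_real_derivative - 2 * c / (c + v)^2) (at v)"
    using cv by (auto intro!: derivative_eq_intros simp: divide_simps) (simp add: power2_eq_square)
  have inverse_sqrt: "inverse (sqrt ?q) = sqrt ?q / ?q"
    using q by (metis less_imp_le sqrt_divide_self_eq)
  have "inverse (sqrt ?q) / 2 * (- 2 * c / (c + v)^2) = - c * sqrt ?q / (c^2 - v^2)"
    unfolding inverse_sqrt power2_diff_power2_factored using cv
    by (simp add: divide_simps) (simp add: algebra_simps power2_eq_square)
  with DERIV_chain2[OF DERIV_real_sqrt[OF q] dq] show ?thesis
    by simp
qed

lemma Xgen_J1:
  fixes c \<rho> v p e dt dx :: real
  assumes cv: "c - v \<noteq> 0" "c + v \<noteq> 0" and B: "c * p + v * e \<noteq> 0"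
  shows "Xgen c (J1 c) \<rho> v p e dt dx = 0"
proof -
  let ?B = "c * p + v * e"
  have d\<rho>: "((\<lambda>s. J1 c s v p e dt dx) has_real_derivative 0) (at \<rho>)"
    and dt: "((\<lambda>s. J1 c \<rho> v p e s dx) has_real_derivative 0) (at dt)"
    unfolding J1_def by simp_all
  have dv: "((\<lambda>s. J1 c \<rho> s p e dt dx) has_real_derivative
      - 2 * c * (e + p) * (c^2 * p - e * v^2) / (?B^2 * (c + v)^2)) (at v)"
    unfolding J1_def using cv B
    by (auto intro!: derivative_eq_intros simp: divide_simps) (simp add: algebra_simps power2_eq_square)
  have dp: "((\<lambda>s. J1 c \<rho> v s e dt dx) has_real_derivative
      2 * c * e * v * (c - v) / (?B^2 * (c + v))) (at p)"
    unfolding J1_def using cv B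
    by (auto intro!: derivative_eq_intros simp: divide_simps) (simp add: algebra_simps power2_eq_square)
  have de: "((\<lambda>s. J1 c \<rho> v p s dt dx) has_real_derivative
      - 2 * c * p * v * (c - v) / (?B^2 * (c + v))) (at e)"
    unfolding J1_def using cv B
    by (auto intro!: derivative_eq_intros simp: divide_simps) (simp add: algebra_simps power2_eq_square)
  \<comment> \<open>the cancellation is (e + p)(c^2 p - e v^2) = p e (c^2 - v^2) + (c p - e v)(c p + e v)\<close>
  show ?thesis
    unfolding Xgen_eq[where J = "J1 c", OF d\<rho> dv dp de dt] power2_diff_power2_factored using cv B
    by (simp add: divide_simps) (simp add: algebra_simps power2_eq_square)
qed

lemma Xgen_J2:
  fixes c \<rho> v p e dt dx :: real
  assumes cv: "c - v > 0" "c + v > 0" and B: "c * p + e * v \<noteq> 0"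
  shows "Xgen c (J2 c) \<rho> v p e dt dx = 0"
proof -
  let ?B = "c * p + e * v" and ?S = "sqrt ((c - v) / (c + v))"
  have cv': "c - v \<noteq> 0" "c + v \<noteq> 0" using cv by simp_all
  have d\<rho>: "((\<lambda>s. J2 c s v p e dt dx) has_real_derivative p * ?S / ?B) (at \<rho>)"
    unfolding J2_def using B by (auto intro!: derivative_eq_intros)
  have dv: "((\<lambda>s. J2 c \<rho> s p e dt dx) has_real_derivative
      - \<rho> * p * ?S * (e * (c^2 - v^2) + c * ?B) / (?B^2 * (c^2 - v^2))) (at v)"
  proof -
    have rational_factor:
      "((\<lambda>s. \<rho> * p / (c * p + e * s)) has_real_derivative - \<rho> * p * e / ?B^2) (at v)"
      using B by (auto intro!: derivative_eq_intros simp: divide_simps) (simp add: power2_eq_square)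
    show ?thesis
      unfolding J2_def using cv' B
      by (intro DERIV_cong[OF DERIV_mult[OF rational_factor has_real_derivative_doppler_factor[OF cv]]])
        (simp only: power2_diff_power2_factored, simp add: divide_simps,
          simp add: algebra_simps power2_eq_square)
  qed
  have dp: "((\<lambda>s. J2 c \<rho> v s e dt dx) has_real_derivative \<rho> * e * v * ?S / ?B^2) (at p)"
    unfolding J2_def using B
    by (auto intro!: derivative_eq_intros simp: divide_simps) (simp add: algebra_simps power2_eq_square)
  have de: "((\<lambda>s. J2 c \<rho> v p s dt dx) has_real_derivative - \<rho> * p * v * ?S / ?B^2) (at e)"
    unfolding J2_def using B
    by (auto intro!: derivative_eq_intros simp: divide_simps) (simp add: algebra_simps power2_eq_square)
  have dt: "((\<lambda>s. J2 c \<rho> v p e s dx) has_real_derivative 0) (at dt)"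
    unfolding J2_def by simp
  \<comment> \<open>the p-term cancels part of the v-term, the rest vanishes as c^2 p^2 - e^2 v^2 = (c p - e v)(c p + e v)\<close>
  show ?thesis
    unfolding Xgen_eq[where J = "J2 c", OF d\<rho> dv dp de dt] power2_diff_power2_factored using cv' B
    by (simp add: divide_simps) (simp add: algebra_simps power2_eq_square)
qed

definition J3_factor :: "real \<Rightarrow> real \<Rightarrow> real \<Rightarrow> real \<Rightarrow> real" where
  "J3_factor c v p e = v * (c * p + e * v) / (p * (c - v))"

definition J3_slope :: "real \<Rightarrow> real \<Rightarrow> real \<Rightarrow> real \<Rightarrow> real" where
  "J3_slope c v p e = v * (e + p) / (p * c^2 + e * v^2)"

lemma J3_eq_factor_slope:
  assumes "p * c^2 + e * v^2 \<noteq> 0"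
  shows "J3 c \<rho> v p e dt dx = J3_factor c v p e * (dt - J3_slope c v p e * dx)"
  unfolding J3_def J3_factor_def J3_slope_def using assms by (simp add: divide_simps)

lemma has_real_derivative_J3_factor:
  assumes "p \<noteq> 0" and "c - v \<noteq> 0"
  shows "((\<lambda>s. J3_factor c s p e) has_real_derivative
          (c^2 * p + 2 * c * e * v - e * v^2) / (p * (c - v)^2)) (at v)"
    and "((\<lambda>s. J3_factor c v s e) has_real_derivative - e * v^2 / (p^2 * (c - v))) (at p)"
    and "((\<lambda>s. J3_factor c v p s) has_real_derivative v^2 / (p * (c - v))) (at e)"
  unfolding J3_factor_def using assms
  by (auto intro!: derivative_eq_intros simp: divide_simps) (simp_all add: algebra_simps power2_eq_square)

lemma has_real_derivative_J3_slope:
  assumes "p * c^2 + e * v^2 \<noteq> 0"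
  shows "((\<lambda>s. J3_slope c s p e) has_real_derivative
          (e + p) * (p * c^2 - e * v^2) / (p * c^2 + e * v^2)^2) (at v)"
    and "((\<lambda>s. J3_slope c v s e) has_real_derivative
          - e * v * (c^2 - v^2) / (p * c^2 + e * v^2)^2) (at p)"
    and "((\<lambda>s. J3_slope c v p s) has_real_derivative
          p * v * (c^2 - v^2) / (p * c^2 + e * v^2)^2) (at e)"
  unfolding J3_slope_def using assms
  by (auto intro!: derivative_eq_intros simp: divide_simps) (simp_all add: algebra_simps power2_eq_square)

lemma J3_factor_eigen:
  assumes "p \<noteq> 0" and "c - v \<noteq> 0" and "c + v \<noteq> 0"
    and "((\<lambda>s. J3_factor c s p e) has_real_derivative P\<^sub>v) (at v)"
    and "((\<lambda>s. J3_factor c v s e) has_real_derivative P\<^sub>p) (at p)"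
    and "((\<lambda>s. J3_factor c v p s) has_real_derivative P\<^sub>e) (at e)"
  shows "- (p * v) * P\<^sub>v - p^2 * P\<^sub>p + (c^2 * p^2 - e^2 * v^2) / (c^2 - v^2) * P\<^sub>e
       = - J3_factor c v p e * (p * c^2 + e * v^2) / (c^2 - v^2)"
proof -
  have closed_forms:
    "P\<^sub>v = (c^2 * p + 2 * c * e * v - e * v^2) / (p * (c - v)^2)"
    "P\<^sub>p = - e * v^2 / (p^2 * (c - v))" "P\<^sub>e = v^2 / (p * (c - v))"
    using DERIV_unique assms(4-6) has_real_derivative_J3_factor[OF assms(1,2)] by blast+
  show ?thesis
    unfolding closed_forms J3_factor_def power2_diff_power2_factored using assms(1-3)
    by (simp add: divide_simps) (simp add: algebra_simps power2_eq_square)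
qed

lemma J3_slope_invariant:
  assumes "c - v \<noteq> 0" and "c + v \<noteq> 0" and "p * c^2 + e * v^2 \<noteq> 0"
    and "((\<lambda>s. J3_slope c s p e) has_real_derivative R\<^sub>v) (at v)"
    and "((\<lambda>s. J3_slope c v s e) has_real_derivative R\<^sub>p) (at p)"
    and "((\<lambda>s. J3_slope c v p s) has_real_derivative R\<^sub>e) (at e)"
  shows "- (p * v) * R\<^sub>v - p^2 * R\<^sub>p + (c^2 * p^2 - e^2 * v^2) / (c^2 - v^2) * R\<^sub>e = 0"
proof -
  have closed_forms:
    "R\<^sub>v = (e + p) * (p * c^2 - e * v^2) / (p * c^2 + e * v^2)^2"
    "R\<^sub>p = - e * v * (c^2 - v^2) / (p * c^2 + e * v^2)^2"
    "R\<^sub>e = p * v * (c^2 - v^2) / (p * c^2 + e * v^2)^2"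
    using DERIV_unique assms(4-6) has_real_derivative_J3_slope[OF assms(3)] by blast+
  show ?thesis
    unfolding closed_forms power2_diff_power2_factored using assms(1-3)
    by (simp add: divide_simps) (simp add: algebra_simps power2_eq_square)
qed

(* J3 agrees with J3_factor * (dt - J3_slope * dx) only where p c^2 + e v^2 \<noteq> 0 (elsewhere
   J3 is 0 by division by zero), so the derivatives are transferred on that open set. *)
lemma has_real_derivative_J3:
  fixes \<rho> dt dx :: real
  assumes M: "p * c^2 + e * v^2 \<noteq> 0"
    and dPv: "((\<lambda>s. J3_factor c s p e) has_real_derivative P\<^sub>v) (at v)"
    and dPp: "((\<lambda>s. J3_factor c v s e) has_real_derivative P\<^sub>p) (at p)"
    and dPe: "((\<lambda>s. J3_factor c v p s) has_real_derivative P\<^sub>e) (at e)"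
    and dRv: "((\<lambda>s. J3_slope c s p e) has_real_derivative R\<^sub>v) (at v)"
    and dRp: "((\<lambda>s. J3_slope c v s e) has_real_derivative R\<^sub>p) (at p)"
    and dRe: "((\<lambda>s. J3_slope c v p s) has_real_derivative R\<^sub>e) (at e)"
  defines "P \<equiv> J3_factor c v p e" and "T \<equiv> dt - J3_slope c v p e * dx"
  shows "((\<lambda>s. J3 c \<rho> s p e dt dx) has_real_derivative P\<^sub>v * T - P * (R\<^sub>v * dx)) (at v)"
    and "((\<lambda>s. J3 c \<rho> v s e dt dx) has_real_derivative P\<^sub>p * T - P * (R\<^sub>p * dx)) (at p)"
    and "((\<lambda>s. J3 c \<rho> v p s dt dx) has_real_derivative P\<^sub>e * T - P * (R\<^sub>e * dx)) (at e)"
    and "((\<lambda>s. J3 c \<rho> v p e s dx) has_real_derivative P) (at dt)"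
proof -
  show "((\<lambda>s. J3 c \<rho> s p e dt dx) has_real_derivative P\<^sub>v * T - P * (R\<^sub>v * dx)) (at v)"
  proof (rule has_real_derivative_transform_nonzero[where m = "\<lambda>s. p * c^2 + e * s^2"])
    show "((\<lambda>s. J3_factor c s p e * (dt - J3_slope c s p e * dx)) has_real_derivative
        P\<^sub>v * T - P * (R\<^sub>v * dx)) (at v)"
      unfolding P_def T_def using dPv dRv by (auto intro!: derivative_eq_intros simp: algebra_simps)
    show "continuous_on UNIV (\<lambda>s. p * c^2 + e * s^2)" by (intro continuous_intros)
  qed (use M J3_eq_factor_slope in auto)
  show "((\<lambda>s. J3 c \<rho> v s e dt dx) has_real_derivative P\<^sub>p * T - P * (R\<^sub>p * dx)) (at p)"
  proof (rule has_real_derivative_transform_nonzero[where m = "\<lambda>s. s * c^2 + e * v^2"])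
    show "((\<lambda>s. J3_factor c v s e * (dt - J3_slope c v s e * dx)) has_real_derivative
        P\<^sub>p * T - P * (R\<^sub>p * dx)) (at p)"
      unfolding P_def T_def using dPp dRp by (auto intro!: derivative_eq_intros simp: algebra_simps)
    show "continuous_on UNIV (\<lambda>s. s * c^2 + e * v^2)" by (intro continuous_intros)
  qed (use M J3_eq_factor_slope in auto)
  show "((\<lambda>s. J3 c \<rho> v p s dt dx) has_real_derivative P\<^sub>e * T - P * (R\<^sub>e * dx)) (at e)"
  proof (rule has_real_derivative_transform_nonzero[where m = "\<lambda>s. p * c^2 + s * v^2"])
    show "((\<lambda>s. J3_factor c v p s * (dt - J3_slope c v p s * dx)) has_real_derivative
        P\<^sub>e * T - P * (R\<^sub>e * dx)) (at e)"
      unfolding P_def T_def using dPe dRe by (auto intro!: derivative_eq_intros simp: algebra_simps)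
    show "continuous_on UNIV (\<lambda>s. p * c^2 + s * v^2)" by (intro continuous_intros)
  qed (use M J3_eq_factor_slope in auto)
  show "((\<lambda>s. J3 c \<rho> v p e s dx) has_real_derivative P) (at dt)"
    unfolding J3_eq_factor_slope[OF M] P_def by (auto intro!: derivative_eq_intros)
qed

lemma Xgen_J3:
  fixes c \<rho> v p e dt dx :: real
  assumes cv: "c - v \<noteq> 0" "c + v \<noteq> 0" and P: "p \<noteq> 0" and M: "p * c^2 + e * v^2 \<noteq> 0"
  shows "Xgen c (J3 c) \<rho> v p e dt dx = 0"
proof -
  let ?P = "J3_factor c v p e" and ?T = "dt - J3_slope c v p e * dx"
    and ?E = "(c^2 * p^2 - e^2 * v^2) / (c^2 - v^2)"
  from has_real_derivative_J3_factor[OF P cv(1)] obtain P\<^sub>v P\<^sub>p P\<^sub>e where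
    dP: "((\<lambda>s. J3_factor c s p e) has_real_derivative P\<^sub>v) (at v)"
      "((\<lambda>s. J3_factor c v s e) has_real_derivative P\<^sub>p) (at p)"
      "((\<lambda>s. J3_factor c v p s) has_real_derivative P\<^sub>e) (at e)"
    by blast
  from has_real_derivative_J3_slope[OF M] obtain R\<^sub>v R\<^sub>p R\<^sub>e where
    dR: "((\<lambda>s. J3_slope c s p e) has_real_derivative R\<^sub>v) (at v)"
      "((\<lambda>s. J3_slope c v s e) has_real_derivative R\<^sub>p) (at p)"
      "((\<lambda>s. J3_slope c v p s) has_real_derivative R\<^sub>e) (at e)"
    by blast
  have d\<rho>: "((\<lambda>s. J3 c s v p e dt dx) has_real_derivative 0) (at \<rho>)"
    unfolding J3_def by simp
  note dJ3 = has_real_derivative_J3[OF M dP dR]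
  have dt_component: "(c^2 * p + e * v^2) * dt - v * (e + p) * dx = (p * c^2 + e * v^2) * ?T"
    unfolding J3_slope_def using M by (simp add: field_simps)
  have "Xgen c (J3 c) \<rho> v p e dt dx
      = (- (p * v) * P\<^sub>v - p^2 * P\<^sub>p + ?E * P\<^sub>e) * ?T
        - ?P * (- (p * v) * R\<^sub>v - p^2 * R\<^sub>p + ?E * R\<^sub>e) * dx
        + (p * c^2 + e * v^2) * ?T / (c^2 - v^2) * ?P"
    unfolding Xgen_eq[where J = "J3 c", OF d\<rho> dJ3] dt_component power2_diff_power2_factored
    using cv by (simp add: divide_simps) (simp add: algebra_simps)
  also have "\<dots> = 0"
    unfolding J3_factor_eigen[OF P cv dP] J3_slope_invariant[OF cv M dR] by simp
  finally show ?thesis .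
qed

theorem mainTheorem2:
  fixes c \<rho> v p e dt dx :: real
  assumes "c > 0" and "\<bar>v\<bar> < c"
  shows "(c * p + v * e \<noteq> 0 \<longrightarrow> Xgen c (J1 c) \<rho> v p e dt dx = 0)
       \<and> (c * p + e * v \<noteq> 0 \<longrightarrow> Xgen c (J2 c) \<rho> v p e dt dx = 0)
       \<and> (p \<noteq> 0 \<and> p * c^2 + e * v^2 \<noteq> 0 \<longrightarrow> Xgen c (J3 c) \<rho> v p e dt dx = 0)"
proof -
  have cv: "c - v > 0" "c + v > 0"
    using assms by (auto simp: abs_less_iff)
  then have cv': "c - v \<noteq> 0" "c + v \<noteq> 0"
    by simp_all
  show ?thesis
    using Xgen_J1[OF cv'] Xgen_J2[OF cv] Xgen_J3[OF cv'] by blast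
qed

end
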